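(* Let $\xi$ be a model, $k\ge1$ an integer, and let $\phi$ be the minimizer of $P_{0,\xi}$ on $\mathcal{C}$. Suppose $\phi\in RSB_k$. Then $\phi'(0)<0$; equivalently, $dm$ has an atom at $0$.
   Context: A model is $\xi(t)=\sum_{p\ge2}\beta_p^2t^p$, real $\beta_p$ not all zero, with $\xi(1+\epsilon)<\infty$ for some $\epsilon>0$. $\mathcal{C}$ is the set of $\phi\in C([0,1])$ with $\phi\ge0$, non-increasing and concave; $P_{0,\xi}(\phi)=\int_0^1(\xi''\phi+1/\phi)dx$. Every $\phi\in\mathcal{C}$ can be written uniquely as $\phi(t)=\int_t^1 m(s)ds+c$ with $c=\phi(1)\ge0$ and $m=-\phi'\ge0$ non-decreasing and càdlàg; $dm$ denotes the Lebesgue–Stieltjes measure of $m$ on $[0,1)$ (with $m=0$ to the left of $0$, so $dm(\{0\})=m(0)$). $RSB_k$ is the set of $\phi\in\mathcal{C}$ for which $dm$ restricted to $[0,1)$ is purely atomic with exactly $k$ atoms. $\phi'(0)=\lim_{t\to0^+}(\phi(t)-\phi(0))/t$. *)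

theory Defs
  imports "HOL-Analysis.Analysis"
begin

definition is_model :: "(nat \<Rightarrow> real) \<Rightarrow> bool" where
  "is_model \<beta> \<longleftrightarrow> \<beta> 0 = 0 \<and> \<beta> 1 = 0 \<and> (\<exists>p. \<beta> p \<noteq> 0) \<and>
     (\<exists>\<epsilon>>0. summable (\<lambda>p. (\<beta> p)\<^sup>2 * (1 + \<epsilon>) ^ p))"

definition xi :: "(nat \<Rightarrow> real) \<Rightarrow> real \<Rightarrow> real" where
  "xi \<beta> t = (\<Sum>p. (\<beta> p)\<^sup>2 * t ^ p)"

definition classC :: "(real \<Rightarrow> real) set" where
  "classC = {\<phi>. continuous_on {0..1} \<phi> \<and> (\<forall>x\<in>{0..1}. 0 \<le> \<phi> x) \<and>
      antimono_on {0..1} \<phi> \<and> concave_on {0..1} \<phi>}"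

definition P0 :: "(nat \<Rightarrow> real) \<Rightarrow> (real \<Rightarrow> real) \<Rightarrow> ennreal" where
  "P0 \<beta> \<phi> = (\<integral>\<^sup>+ x \<in> {0..1}. (ennreal (deriv (deriv (xi \<beta>)) x * \<phi> x)
        + (if \<phi> x > 0 then ennreal (1 / \<phi> x) else \<infinity>)) \<partial>lborel)"

text \<open>phi(t) = int_t^1 m + phi(1) with m(s) = sum of the atoms a_q, q in Q, q <= s:
  i.e. dm on [0,1) is purely atomic with atoms Q (weights a > 0).\<close>
definition atomic_repr :: "(real \<Rightarrow> real) \<Rightarrow> real set \<Rightarrow> (real \<Rightarrow> real) \<Rightarrow> bool" where
  "atomic_repr \<phi> Q a \<longleftrightarrow> finite Q \<and> Q \<subseteq> {0..<1} \<and> (\<forall>q\<in>Q. 0 < a q) \<and>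
     (\<forall>t\<in>{0..1}. \<phi> t = \<phi> 1 + integral {t..1} (\<lambda>s. \<Sum>q\<in>{q\<in>Q. q \<le> s}. a q))"

definition RSB :: "nat \<Rightarrow> (real \<Rightarrow> real) set" where
  "RSB k = {\<phi>\<in>classC. \<exists>Q a. atomic_repr \<phi> Q a \<and> card Q = k}"

end

theory Submission
  imports Defs
begin

text \<open>
  Suppose the minimiser \<open>\<phi>\<close> has atoms, but none at \<open>0\<close>, and let \<open>q > 0\<close> be its first atom, so
  that \<open>\<phi>\<close> is constant on \<open>[0, q]\<close>.

  If \<open>\<xi>\<close> has a monomial of degree at least three, then \<open>\<xi>(q) < q \<xi>'(q) / 2\<close>. Moving a mass \<open>s\<close>
  from the atom at \<open>q\<close> to new atoms at \<open>0\<close> and just above \<open>q\<close> changes \<open>P\<close> by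
  \<open>s (\<xi>(q) - q \<xi>'(q) / 2) + O(s\<^sup>2) + O(s (u - q))\<close>: on \<open>[0, q]\<close> the perturbation is \<open>s (q / 2 - t)\<close>,
  whose integral against the constant \<open>1 / \<phi>\<^sup>2\<close> vanishes, while two integrations by parts turn its
  integral against \<open>\<xi>''\<close> into \<open>\<xi>(q) - q \<xi>'(q) / 2\<close>. For small parameters this is negative,
  contradicting minimality.

  If \<open>\<xi>(t) = b t\<^sup>2\<close>, completing the square gives \<open>2 b y + 1 / y = 2 r + (r y - 1)\<^sup>2 / y\<close> with
  \<open>r = \<surd>(2 b)\<close>, so \<open>P \<ge> 2 r\<close> with equality only for the constant \<open>1 / r\<close>, which \<open>\<phi>\<close> is not.

  Hence \<open>0\<close> is an atom, and then \<open>\<phi>'(0)\<close> is minus its mass.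
\<close>

section \<open>The class C\<close>

lemma classC_cong:
  assumes "f \<in> classC" and "\<And>t. t \<in> {0..1} \<Longrightarrow> g t = f t"
  shows "g \<in> classC"
proof -
  have "continuous_on {0..1} g"
    using assms continuous_on_cong[of "{0..1}" "{0..1}" g f] by (auto simp: classC_def)
  moreover have "concave_on {0..1} g"
    using assms convexD[OF convex_real_interval(5)] by (auto simp: classC_def concave_on_iff)
  moreover have "antimono_on {0..1} g" "\<forall>x\<in>{0..1}. 0 \<le> g x"
    using assms by (auto simp: classC_def monotone_on_def)
  ultimately show ?thesis by (simp add: classC_def)
qed

lemma classC_add: "f \<in> classC \<Longrightarrow> g \<in> classC \<Longrightarrow> (\<lambda>t. f t + g t) \<in> classC"
  unfolding classC_def
  by (auto simp: monotone_on_def intro!: continuous_on_add concave_on_add add_mono)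

lemma classC_cmult: "f \<in> classC \<Longrightarrow> 0 \<le> c \<Longrightarrow> (\<lambda>t. c * f t) \<in> classC"
  unfolding classC_def
  by (auto simp: monotone_on_def intro!: continuous_on_mult concave_on_cmul mult_left_mono)

lemma classC_const: "0 \<le> c \<Longrightarrow> (\<lambda>t. c) \<in> classC"
  unfolding classC_def by (auto simp: monotone_on_def concave_on_const)

lemma classC_sum:
  "finite S \<Longrightarrow> (\<And>i. i \<in> S \<Longrightarrow> f i \<in> classC) \<Longrightarrow> (\<lambda>t. \<Sum>i\<in>S. f i t) \<in> classC"
proof (induction S rule: finite_induct)
  case empty
  then show ?case using classC_const[of 0] by simp
next
  case (insert x F)
  then show ?case using classC_add[of "f x" "\<lambda>t. \<Sum>i\<in>F. f i t"] by simp
qed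

lemma concave_on_one_minus_max: "concave_on {0..1} (\<lambda>t::real. 1 - max t u)"
proof -
  have "convex_on {0..1} (\<lambda>t::real. max t u)"
  proof (rule convex_onI)
    fix t x y :: real assume t: "0 < t" "t < 1"
    have "(1 - t) * x + t * y \<le> (1 - t) * max x u + t * max y u"
      "(1 - t) * u + t * u \<le> (1 - t) * max x u + t * max y u"
      using t by (intro add_mono mult_left_mono; simp)+
    then have "max ((1 - t) * x + t * y) u \<le> (1 - t) * max x u + t * max y u"
      by (intro max.boundedI) (simp_all add: algebra_simps)
    then show "max ((1 - t) *\<^sub>R x + t *\<^sub>R y) u \<le> (1 - t) * max x u + t * max y u"
      by simp
  qed simp
  then show ?thesis by (intro concave_on_diff) (simp_all add: concave_on_const)
qed

lemma classC_ramp: "u \<le> 1 \<Longrightarrow> (\<lambda>t. 1 - max t u) \<in> classC"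
  unfolding classC_def
  by (auto simp: monotone_on_def concave_on_one_minus_max intro!: continuous_intros)

section \<open>Purely atomic representations\<close>

lemma atomic_repr_sum_eq:
  assumes "atomic_repr \<phi> Q a" and t: "t \<in> {0..1}"
  shows "\<phi> t = \<phi> 1 + (\<Sum>q\<in>Q. a q * (1 - max t q))"
proof -
  have fin: "finite Q" and Q: "Q \<subseteq> {0..<1}"
    and eq: "\<phi> t = \<phi> 1 + integral {t..1} (\<lambda>s. \<Sum>q\<in>{q\<in>Q. q \<le> s}. a q)"
    using assms unfolding atomic_repr_def by blast+
  have step: "((\<lambda>s. if s \<in> {q..} then a q else 0) has_integral a q * (1 - max t q)) {t..1}"
    if "q \<in> Q" for q
  proof -
    have "{q..} \<inter> {t..1} = {max t q..1}" by auto
    moreover have "((\<lambda>_. a q) has_integral a q * (1 - max t q)) {max t q..1}"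
      using has_integral_const_real[of "a q" "max t q" 1] Q that t by (auto simp: mult.commute)
    ultimately show ?thesis
      using has_integral_restrict_Int[of "{q..}" "\<lambda>_. a q" _ "{t..1}"] by (simp add: max.commute)
  qed
  have "(\<lambda>s. \<Sum>q\<in>{q\<in>Q. q \<le> s}. a q) = (\<lambda>s. \<Sum>q\<in>Q. if s \<in> {q..} then a q else 0)"
    using sum.inter_filter[OF fin, of a] by (intro ext) simp
  moreover have "((\<lambda>s. \<Sum>q\<in>Q. if s \<in> {q..} then a q else 0)
      has_integral (\<Sum>q\<in>Q. a q * (1 - max t q))) {t..1}"
    using step by (intro has_integral_sum fin) auto
  ultimately show ?thesis using eq by (simp add: integral_unique)
qed

lemma atomic_repr_atom_le:
  assumes "atomic_repr \<phi> Q a" and "q \<in> Q" and "t \<in> {0..1}"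
  shows "a q * (1 - max t q) \<le> \<phi> t - \<phi> 1"
proof -
  have fin: "finite Q" and Q: "Q \<subseteq> {0..<1}" and pos: "\<forall>q\<in>Q. 0 < a q"
    using assms(1) unfolding atomic_repr_def by blast+
  have "0 \<le> a p * (1 - max t p)" if "p \<in> Q" for p
    using pos Q that assms(3) by (intro mult_nonneg_nonneg) auto
  then have "a q * (1 - max t q) \<le> (\<Sum>q\<in>Q. a q * (1 - max t q))"
    using assms(2) fin by (intro member_le_sum) auto
  then show ?thesis using atomic_repr_sum_eq[OF assms(1,3)] by simp
qed

lemma atomic_repr_eq_below_atoms:
  assumes "atomic_repr \<phi> Q a" and "0 \<le> t" "t \<le> 1" and "\<And>q. q \<in> Q \<Longrightarrow> t \<le> q"
  shows "\<phi> t = \<phi> 0"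
proof -
  have "Q \<subseteq> {0..<1}" using assms(1) unfolding atomic_repr_def by blast
  then have "a q * (1 - max t q) = a q * (1 - max 0 q)" if "q \<in> Q" for q
    using assms(4)[OF that] that by auto
  then have "(\<Sum>q\<in>Q. a q * (1 - max t q)) = (\<Sum>q\<in>Q. a q * (1 - max 0 q))"
    by (rule sum.cong[OF refl])
  then show ?thesis
    using atomic_repr_sum_eq[OF assms(1), of t] atomic_repr_sum_eq[OF assms(1), of 0] assms(2,3) by simp
qed

lemma atomic_repr_le_drop:
  assumes "atomic_repr \<phi> Q a" and "q \<in> Q" and "t \<in> {0..1}"
  shows "\<phi> t \<le> \<phi> 0 - a q * (max t q - q)"
proof -
  have fin: "finite Q" and Q: "Q \<subseteq> {0..<1}" and pos: "\<forall>q\<in>Q. 0 < a q"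
    using assms(1) unfolding atomic_repr_def by blast+
  have "\<phi> 0 - \<phi> t = (\<Sum>q\<in>Q. a q * (max t q - max 0 q))"
    using atomic_repr_sum_eq[OF assms(1) assms(3)] atomic_repr_sum_eq[OF assms(1), of 0]
    by (simp add: sum_subtractf[symmetric] algebra_simps)
  moreover have "0 \<le> a p * (max t p - max 0 p)" if "p \<in> Q" for p
    using pos that assms(3) by (intro mult_nonneg_nonneg) auto
  then have "a q * (max t q - max 0 q) \<le> (\<Sum>q\<in>Q. a q * (max t q - max 0 q))"
    using assms(2) fin by (intro member_le_sum) auto
  moreover have "max 0 q = q" using assms(2) Q by auto
  ultimately show ?thesis by simp
qed

lemma atomic_repr_nonempty:
  assumes "atomic_repr \<phi> Q a" and "atomic_repr \<phi> Q' a'" and "Q \<noteq> {}"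
  shows "Q' \<noteq> {}"
proof
  assume "Q' = {}"
  obtain q where q: "q \<in> Q" using assms(3) by blast
  have "Q \<subseteq> {0..<1}" and "\<forall>q\<in>Q. 0 < a q"
    using assms(1) unfolding atomic_repr_def by blast+
  then have q01: "q \<in> {0..1}" and "0 < a q * (1 - q)"
    using q by auto
  moreover have "a q * (1 - max q q) \<le> \<phi> q - \<phi> 1"
    by (rule atomic_repr_atom_le[OF assms(1) q q01])
  moreover have "\<phi> q = \<phi> 1" using atomic_repr_sum_eq[OF assms(2) q01] \<open>Q' = {}\<close> by simp
  ultimately show False by simp
qed

lemma atomic_repr_slope_at_0:
  assumes "atomic_repr \<phi> Q a" and "0 \<in> Q"
  shows "((\<lambda>t. (\<phi> t - \<phi> 0) / t) \<longlongrightarrow> - a 0) (at_right 0)"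
proof -
  have fin: "finite Q" and Q: "Q \<subseteq> {0..<1}"
    using assms(1) unfolding atomic_repr_def by blast+
  define d where "d = Min (insert 1 (Q - {0}))"
  have "0 < d" unfolding d_def using fin Q by (subst Min_gr_iff) auto
  have d_le: "d \<le> 1" "\<And>q. q \<in> Q - {0} \<Longrightarrow> d \<le> q"
    unfolding d_def using fin by auto
  have slope: "(\<phi> t - \<phi> 0) / t = - a 0" if t: "0 < t" "t < d" for t
  proof -
    have near: "t \<le> q" if "q \<in> Q - {0}" for q
      using d_le(2)[OF that] t by simp
    have "t \<in> {0..1}" using d_le(1) t by simp
    then have "\<phi> t - \<phi> 0 = (\<Sum>q\<in>Q. a q * (max 0 q - max t q))"
      using atomic_repr_sum_eq[OF assms(1), of t] atomic_repr_sum_eq[OF assms(1), of 0]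
      by (simp add: sum_subtractf[symmetric] algebra_simps)
    also have "\<dots> = a 0 * (- t) + (\<Sum>q\<in>Q - {0}. a q * (max 0 q - max t q))"
      using sum.remove[OF fin assms(2), of "\<lambda>q. a q * (max 0 q - max t q)"] t by simp
    also have "(\<Sum>q\<in>Q - {0}. a q * (max 0 q - max t q)) = 0"
      using near Q by (intro sum.neutral) (auto simp: subset_iff)
    finally show ?thesis using t by simp
  qed
  have "eventually (\<lambda>t. (\<phi> t - \<phi> 0) / t = - a 0) (at_right 0)"
    using eventually_at_right_real[OF \<open>0 < d\<close>] by eventually_elim (use slope in auto)
  then show ?thesis by (rule tendsto_eventually)
qed

lemma atomic_repr_minus_ramp_classC:
  assumes "\<phi> \<in> classC" and rep: "atomic_repr \<phi> Q a" and q: "q \<in> Q" and c: "0 \<le> c" "c \<le> a q"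
  shows "(\<lambda>t. \<phi> t - c * (1 - max t q)) \<in> classC"
proof (rule classC_cong)
  have fin: "finite Q" and Q: "Q \<subseteq> {0..<1}" and pos: "\<forall>q\<in>Q. 0 < a q"
    using rep unfolding atomic_repr_def by blast+
  have "0 \<le> \<phi> 1" using assms(1) by (auto simp: classC_def)
  then show "(\<lambda>t. \<phi> 1 + (\<Sum>p\<in>Q - {q}. a p * (1 - max t p)) + (a q - c) * (1 - max t q)) \<in> classC"
    using fin Q pos q c
    by (intro classC_add classC_sum classC_cmult classC_ramp classC_const) (auto simp: less_imp_le)
  fix t :: real assume "t \<in> {0..1}"
  then show "\<phi> t - c * (1 - max t q)
      = \<phi> 1 + (\<Sum>p\<in>Q - {q}. a p * (1 - max t p)) + (a q - c) * (1 - max t q)"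
    using atomic_repr_sum_eq[OF rep \<open>t \<in> {0..1}\<close>] sum.remove[OF fin q, of "\<lambda>p. a p * (1 - max t p)"]
    by (simp add: algebra_simps)
qed

lemma atomic_repr_first_atom:
  assumes "\<phi> \<in> classC" and rep: "atomic_repr \<phi> Q a" and "Q \<noteq> {}" and "0 \<notin> Q"
  obtains q where "q \<in> Q" "0 < q" "q < 1" "0 < a q"
    and "\<And>t. t \<in> {0..q} \<Longrightarrow> \<phi> t = \<phi> 0"
    and "\<And>t. t \<in> {0..(1 + q) / 2} \<Longrightarrow> a q * (1 - q) / 2 \<le> \<phi> t"
proof
  have fin: "finite Q" and Q: "Q \<subseteq> {0..<1}" and pos: "\<forall>q\<in>Q. 0 < a q"
    using rep unfolding atomic_repr_def by blast+
  show q: "Min Q \<in> Q" using fin \<open>Q \<noteq> {}\<close> by simp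
  show "Min Q < 1" using q Q by auto
  show "0 < Min Q" using q Q \<open>0 \<notin> Q\<close> by (metis atLeastLessThan_iff less_eq_real_def subsetD)
  show "0 < a (Min Q)" using q pos by blast
  show "\<phi> t = \<phi> 0" if "t \<in> {0..Min Q}" for t
    using that \<open>Min Q < 1\<close> Min_le[OF fin]
    by (intro atomic_repr_eq_below_atoms[OF rep]) (auto intro: order_trans)
  show "a (Min Q) * (1 - Min Q) / 2 \<le> \<phi> t" if t: "t \<in> {0..(1 + Min Q) / 2}" for t
  proof -
    have "(1 - Min Q) / 2 \<le> 1 - max t (Min Q)" using t \<open>Min Q < 1\<close> by auto
    then have "a (Min Q) * (1 - Min Q) / 2 \<le> a (Min Q) * (1 - max t (Min Q))"
      using \<open>0 < a (Min Q)\<close> by (simp add: mult_left_mono)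
    also have "\<dots> \<le> \<phi> t - \<phi> 1"
      using t \<open>Min Q < 1\<close> by (intro atomic_repr_atom_le[OF rep q]) auto
    also have "\<dots> \<le> \<phi> t" using \<open>\<phi> \<in> classC\<close> by (simp add: classC_def)
    finally show ?thesis .
  qed
qed

section \<open>Moving mass between atoms\<close>

text \<open>Adding \<open>s * atom_shift q u\<close> to \<open>\<phi>\<close> moves mass \<open>s (1 + l)\<close>, \<open>l = q / (2 (u - q))\<close>, from the atom at \<open>q\<close>
  to new atoms at \<open>0\<close> (mass \<open>s\<close>) and \<open>u\<close> (mass \<open>s l\<close>); the weights make it equal to \<open>q / 2 - t\<close> on
  \<open>[0, q]\<close>, which has mean zero there, and vanish beyond \<open>u\<close>.\<close>
definition atom_shift :: "real \<Rightarrow> real \<Rightarrow> real \<Rightarrow> real" where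
  "atom_shift q u t = (1 - max t 0) + q / (2 * (u - q)) * (1 - max t u)
     - (1 + q / (2 * (u - q))) * (1 - max t q)"

lemma atom_shift_below:
  assumes "0 \<le> t" "t \<le> q" "q < u"
  shows "atom_shift q u t = q / 2 - t"
proof -
  define l where "l = q / (2 * (u - q))"
  have "l * (u - q) = q / 2" unfolding l_def using assms by (simp add: field_simps)
  moreover have "atom_shift q u t = q - t - l * (u - q)"
    using assms unfolding atom_shift_def l_def[symmetric] by (simp add: algebra_simps)
  ultimately show ?thesis by simp
qed

lemma atom_shift_between:
  assumes "q \<le> t" "t \<le> u" "q < u" "0 \<le> q"
  shows "- q / 2 \<le> atom_shift q u t" "atom_shift q u t \<le> 0"
proof -
  define l where "l = q / (2 * (u - q))"
  have l: "0 \<le> l" "l * (u - q) = q / 2" unfolding l_def using assms by (auto simp: field_simps)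
  have eq: "atom_shift q u t = - (l * (u - t))"
    using assms unfolding atom_shift_def l_def[symmetric] by (simp add: algebra_simps)
  have "l * (u - t) \<le> l * (u - q)" using l assms by (intro mult_left_mono) auto
  then show "- q / 2 \<le> atom_shift q u t" using eq l by simp
  show "atom_shift q u t \<le> 0" using eq l assms by simp
qed

lemma atom_shift_above:
  assumes "u \<le> t" "q < u" "0 \<le> q"
  shows "atom_shift q u t = 0"
  using assms unfolding atom_shift_def by (simp add: algebra_simps)

lemma abs_atom_shift_le:
  assumes "0 \<le> q" "q < u" "0 \<le> t"
  shows "\<bar>atom_shift q u t\<bar> \<le> q / 2"
proof -
  consider "t \<le> q" | "q \<le> t" "t \<le> u" | "u \<le> t" by linarith
  then show ?thesis
  proof cases
    case 1
    then have "\<bar>q / 2 - t\<bar> \<le> q / 2" using assms by (intro abs_leI) auto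
    then show ?thesis using 1 assms atom_shift_below[of t q u] by simp
  next
    case 2
    then show ?thesis using assms atom_shift_between[of q t u] by auto
  qed (use assms atom_shift_above in auto)
qed

lemma atom_shift_perturbation_ge:
  assumes "0 \<le> q" "q < u" "q \<le> 1" "0 \<le> t" "c \<le> y" "0 \<le> s" "s \<le> c"
  shows "c / 2 \<le> y + s * atom_shift q u t"
proof -
  have "\<bar>s * atom_shift q u t\<bar> \<le> s * (q / 2)"
    unfolding abs_mult using abs_atom_shift_le[of q u t] assms by (intro mult_mono) auto
  also have "\<dots> \<le> s / 2" using assms by (simp add: mult_left_le)
  finally show ?thesis using assms by (auto simp: abs_le_iff)
qed

lemma classC_plus_atom_shift:
  assumes "\<phi> \<in> classC" and rep: "atomic_repr \<phi> Q a" and q: "q \<in> Q" and "q < u" "u \<le> 1"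
    and s: "0 \<le> s" "s * (1 + q / (2 * (u - q))) \<le> a q"
  shows "(\<lambda>t. \<phi> t + s * atom_shift q u t) \<in> classC"
proof -
  define l where "l = q / (2 * (u - q))"
  have "0 \<le> q" using rep q unfolding atomic_repr_def by auto
  then have "0 \<le> l" unfolding l_def using \<open>q < u\<close> by simp
  have "(\<lambda>t. \<phi> t - s * (1 + l) * (1 - max t q) + s * (1 - max t 0) + s * l * (1 - max t u)) \<in> classC"
    using \<open>0 \<le> l\<close> s \<open>u \<le> 1\<close> unfolding l_def[symmetric]
    by (intro classC_add classC_cmult classC_ramp atomic_repr_minus_ramp_classC[OF assms(1) rep q])
      auto
  then show ?thesis unfolding atom_shift_def l_def[symmetric] by (simp add: algebra_simps)
qed

section \<open>The functional P0\<close>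

definition energy_density :: "(real \<Rightarrow> real) \<Rightarrow> (real \<Rightarrow> real) \<Rightarrow> real \<Rightarrow> ennreal" where
  "energy_density X \<phi> x = ennreal (X x * \<phi> x) + (if \<phi> x > 0 then ennreal (1 / \<phi> x) else \<infinity>)"

lemma P0_eq_nn_integral_energy_density:
  "P0 \<beta> \<phi> = (\<integral>\<^sup>+x. energy_density (deriv (deriv (xi \<beta>))) \<phi> x * indicator {0..1} x \<partial>lborel)"
  unfolding P0_def energy_density_def by simp

lemma energy_integrable:
  fixes X f :: "real \<Rightarrow> real"
  assumes "continuous_on {a..b} X" "continuous_on {a..b} f" "\<And>t. t \<in> {a..b} \<Longrightarrow> 0 < f t"
  shows "(\<lambda>t. X t * f t + 1 / f t) integrable_on {a..b}"
proof -
  have "\<And>t. t \<in> {a..b} \<Longrightarrow> f t \<noteq> 0" using assms(3) by force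
  then show ?thesis using assms(1,2) by (intro integrable_continuous_interval continuous_intros) auto
qed

lemma nn_integral_energy_density_eq_integral:
  assumes "0 \<le> u" and DX: "\<And>x. x \<in> {0..u} \<Longrightarrow> D x = X x"
    and X: "continuous_on {0..u} X" "\<And>x. x \<in> {0..u} \<Longrightarrow> 0 \<le> X x"
    and f: "continuous_on {0..u} f" "\<And>x. x \<in> {0..u} \<Longrightarrow> 0 < f x"
  shows "(\<integral>\<^sup>+x. energy_density D f x * indicator {0..u} x \<partial>lborel)
    = ennreal (integral {0..u} (\<lambda>x. X x * f x + 1 / f x))"
proof -
  have eq: "energy_density D f x * indicator {0..u} x
      = ennreal (X x * f x + 1 / f x) * indicator {0..u} x" for x
    using X(2)[of x] f(2)[of x] DX[of x]
    by (cases "x \<in> {0..u}") (simp_all add: energy_density_def ennreal_plus)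
  have "((\<lambda>x. X x * f x + 1 / f x) has_integral integral {0..u} (\<lambda>x. X x * f x + 1 / f x)) {0..u}"
    using X(1) f by (intro integrable_integral energy_integrable)
  moreover have "\<And>x. x \<in> {0..u} \<Longrightarrow> 0 \<le> X x * f x + 1 / f x"
    using X(2) f(2) by (simp add: less_imp_le)
  ultimately show ?thesis unfolding eq by (rule nn_integral_has_integral_lebesgue'[rotated])
qed

lemma nn_integral_energy_density_split:
  assumes f: "continuous_on {0..1} f" and u: "0 \<le> u" "u \<le> 1"
    and DX: "\<And>x. x \<in> {0..1} \<Longrightarrow> D x = X x" and X: "continuous_on {0..1} X"
  shows "(\<integral>\<^sup>+x. energy_density D f x * indicator {0..1} x \<partial>lborel)
    = (\<integral>\<^sup>+x. energy_density D f x * indicator {0..u} x \<partial>lborel)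
      + (\<integral>\<^sup>+x. energy_density D f x * indicator {u<..1} x \<partial>lborel)"
proof -
  \<comment> \<open>\<open>D\<close> need not be measurable; replace it by the continuous extension of \<open>X\<close>.\<close>
  define clamp :: "real \<Rightarrow> real" where "clamp x = max 0 (min 1 x)" for x
  have clamp: "continuous_on UNIV clamp" "clamp ` UNIV \<subseteq> {0..1}" "\<And>x. x \<in> {0..1} \<Longrightarrow> clamp x = x"
    unfolding clamp_def by (auto intro!: continuous_intros)
  define G where "G = energy_density (\<lambda>x. X (clamp x)) (\<lambda>x. f (clamp x))"
  have [measurable]: "(\<lambda>x. f (clamp x)) \<in> borel_measurable borel" "(\<lambda>x. X (clamp x)) \<in> borel_measurable borel"
    using continuous_on_compose2[OF f clamp(1,2)] continuous_on_compose2[OF X clamp(1,2)]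
    by (auto intro: borel_measurable_continuous_onI)
  have G_measurable[measurable]: "G \<in> borel_measurable borel"
    unfolding G_def energy_density_def by measurable
  have G_eq: "energy_density D f x * indicator A x = G x * indicator A x" if "A \<subseteq> {0..1}" for x A
    using that DX clamp(3) by (cases "x \<in> A") (auto simp: G_def energy_density_def)
  have "G x * indicator {0..1} x = G x * indicator {0..u} x + G x * indicator {u<..1} x" for x
    using u by (auto simp: indicator_def)
  then have "(\<integral>\<^sup>+x. G x * indicator {0..1} x \<partial>lborel)
      = (\<integral>\<^sup>+x. G x * indicator {0..u} x \<partial>lborel) + (\<integral>\<^sup>+x. G x * indicator {u<..1} x \<partial>lborel)"
    by (simp add: nn_integral_add)
  moreover have "{0..u} \<subseteq> {0..1}" "{u<..1} \<subseteq> {0..1}" using u by auto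
  ultimately show ?thesis using G_eq[of "{0..1}"] G_eq[of "{0..u}"] G_eq[of "{u<..1}"] by simp
qed

lemma P0_const:
  assumes DX: "\<And>x. x \<in> {0..1} \<Longrightarrow> deriv (deriv (xi \<beta>)) x = X x"
    and X: "continuous_on {0..1} X" "\<And>x. x \<in> {0..1} \<Longrightarrow> 0 \<le> X x" and "0 < c"
  shows "P0 \<beta> (\<lambda>_. c) = ennreal (integral {0..1} (\<lambda>x. X x * c + 1 / c))"
  unfolding P0_eq_nn_integral_energy_density
  by (rule nn_integral_energy_density_eq_integral[OF _ DX X]) (use \<open>0 < c\<close> in auto)

lemma P0_finite_of_minimizer:
  assumes DX: "\<And>x. x \<in> {0..1} \<Longrightarrow> deriv (deriv (xi \<beta>)) x = X x"
    and X: "continuous_on {0..1} X" "\<And>x. x \<in> {0..1} \<Longrightarrow> 0 \<le> X x"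
    and min: "\<forall>\<psi>\<in>classC. P0 \<beta> \<phi> \<le> P0 \<beta> \<psi>"
  shows "P0 \<beta> \<phi> < \<infinity>"
proof -
  have "P0 \<beta> \<phi> \<le> P0 \<beta> (\<lambda>_. 1)" using min classC_const[of 1] by simp
  also have "\<dots> < \<infinity>" using P0_const[OF DX X, of 1] by simp
  finally show ?thesis .
qed

lemma P0_lt_of_local_decrease:
  assumes DX: "\<And>x. x \<in> {0..1} \<Longrightarrow> deriv (deriv (xi \<beta>)) x = X x"
    and X: "continuous_on {0..1} X" "\<And>x. x \<in> {0..1} \<Longrightarrow> 0 \<le> X x"
    and cont: "continuous_on {0..1} \<phi>" "continuous_on {0..1} \<psi>"
    and u: "0 \<le> u" "u \<le> 1" and pos: "\<And>t. t \<in> {0..u} \<Longrightarrow> 0 < \<phi> t" "\<And>t. t \<in> {0..u} \<Longrightarrow> 0 < \<psi> t"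
    and tail: "\<And>t. u < t \<Longrightarrow> \<psi> t = \<phi> t"
    and fin: "P0 \<beta> \<phi> < \<infinity>"
    and less: "integral {0..u} (\<lambda>t. X t * \<psi> t + 1 / \<psi> t) < integral {0..u} (\<lambda>t. X t * \<phi> t + 1 / \<phi> t)"
  shows "P0 \<beta> \<psi> < P0 \<beta> \<phi>"
proof -
  let ?D = "deriv (deriv (xi \<beta>))"
  define R where "R = (\<integral>\<^sup>+x. energy_density ?D \<phi> x * indicator {u<..1} x \<partial>lborel)"
  have sub: "{0..u} \<subseteq> {0..1}" using u by auto
  have local: "(\<integral>\<^sup>+x. energy_density ?D f x * indicator {0..u} x \<partial>lborel)
      = ennreal (integral {0..u} (\<lambda>x. X x * f x + 1 / f x))"
    if "continuous_on {0..1} f" "\<And>t. t \<in> {0..u} \<Longrightarrow> 0 < f t" for f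
    using that DX X sub u
    by (intro nn_integral_energy_density_eq_integral continuous_on_subset[OF _ sub]) auto
  have split: "P0 \<beta> f = ennreal (integral {0..u} (\<lambda>x. X x * f x + 1 / f x))
      + (\<integral>\<^sup>+x. energy_density ?D f x * indicator {u<..1} x \<partial>lborel)"
    if "continuous_on {0..1} f" "\<And>t. t \<in> {0..u} \<Longrightarrow> 0 < f t" for f
    using nn_integral_energy_density_split[OF that(1) u DX X(1)] local[OF that]
    unfolding P0_eq_nn_integral_energy_density by simp
  have "(\<integral>\<^sup>+x. energy_density ?D \<psi> x * indicator {u<..1} x \<partial>lborel) = R"
    unfolding R_def using tail
    by (intro nn_integral_cong) (auto simp: energy_density_def indicator_def)
  then have P\<psi>: "P0 \<beta> \<psi> = ennreal (integral {0..u} (\<lambda>x. X x * \<psi> x + 1 / \<psi> x)) + R"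
    using split[OF cont(2) pos(2)] by simp
  have P\<phi>: "P0 \<beta> \<phi> = ennreal (integral {0..u} (\<lambda>x. X x * \<phi> x + 1 / \<phi> x)) + R"
    using split[OF cont(1) pos(1)] unfolding R_def by simp
  have "R \<noteq> \<infinity>" using fin unfolding P\<phi> by auto
  moreover have "0 \<le> integral {0..u} (\<lambda>x. X x * \<psi> x + 1 / \<psi> x)"
    using X(2) pos(2) sub
    by (cases "(\<lambda>x. X x * \<psi> x + 1 / \<psi> x) integrable_on {0..u}")
      (auto intro!: Henstock_Kurzweil_Integration.integral_nonneg simp: not_integrable_integral less_imp_le subset_iff)
  ultimately show ?thesis
    unfolding P\<psi> P\<phi> using less by (simp add: ennreal_less_iff ennreal_add_left_cancel_less add.commute)
qed

section \<open>Local energy estimates\<close>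

lemma inverse_add_le_second_order:
  fixes A x s c :: real
  assumes c: "0 < c" "c \<le> A" and "c / 2 \<le> A + x" and "\<bar>x\<bar> \<le> s / 2"
  shows "1 / (A + x) - 1 / A \<le> - x / A\<^sup>2 + s\<^sup>2 / (2 * c ^ 3)"
proof -
  have "0 < A" "0 < A + x" using assms by auto
  have "1 / B - 1 / A = - (B - A) / A\<^sup>2 + (B - A)\<^sup>2 / (A\<^sup>2 * B)" if "0 < B" for B
    using \<open>0 < A\<close> that by (simp add: field_simps power2_eq_square)
  from this[OF \<open>0 < A + x\<close>]
  have "1 / (A + x) - 1 / A = - x / A\<^sup>2 + x\<^sup>2 / (A\<^sup>2 * (A + x))" by simp
  moreover have "x\<^sup>2 / (A\<^sup>2 * (A + x)) \<le> (s / 2)\<^sup>2 / (c\<^sup>2 * (c / 2))"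
  proof (rule frac_le)
    show "x\<^sup>2 \<le> (s / 2)\<^sup>2"
      using assms(4) by (metis abs_ge_zero order_trans power2_abs power_mono)
    show "c\<^sup>2 * (c / 2) \<le> A\<^sup>2 * (A + x)"
      using assms by (intro mult_mono power_mono) auto
  qed (use c in auto)
  moreover have "(s / 2)\<^sup>2 / (c\<^sup>2 * (c / 2)) = s\<^sup>2 / (2 * c ^ 3)"
    using c by (simp add: field_simps power2_eq_square power3_eq_cube)
  ultimately show ?thesis by simp
qed

lemma inverse_diff_le:
  fixes c p y s :: real
  assumes "0 < c" "c \<le> p" "c / 2 \<le> y" "p - y \<le> s / 2" "y \<le> p"
  shows "1 / y - 1 / p \<le> s / c\<^sup>2"
proof -
  have "1 / y - 1 / p = (p - y) / (p * y)" using assms by (simp add: field_simps)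
  also have "\<dots> \<le> (s / 2) / (c * (c / 2))"
    using assms by (intro frac_le mult_mono) auto
  also have "\<dots> = s / c\<^sup>2" using assms by (simp add: field_simps power2_eq_square)
  finally show ?thesis .
qed

lemma first_variation_has_integral:
  assumes F: "\<And>t. t \<in> {0..q} \<Longrightarrow> (F has_real_derivative F' t) (at t)"
    and F': "\<And>t. t \<in> {0..q} \<Longrightarrow> (F' has_real_derivative F'' t) (at t)"
    and "F 0 = 0" "F' 0 = 0" "0 \<le> q"
  shows "((\<lambda>t. (q / 2 - t) * (F'' t - B)) has_integral F q - q * F' q / 2) {0..q}"
proof -
  define G where "G t = (q / 2 - t) * F' t + F t - (q * t / 2 - t\<^sup>2 / 2) * B" for t
  have "(G has_real_derivative (q / 2 - t) * (F'' t - B)) (at t)" if "t \<in> {0..q}" for t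
    unfolding G_def by (auto intro!: derivative_eq_intros F[OF that] F'[OF that] simp: field_simps)
  then have "((\<lambda>t. (q / 2 - t) * (F'' t - B)) has_integral G q - G 0) {0..q}"
    using \<open>0 \<le> q\<close>
    by (intro fundamental_theorem_of_calculus)
      (simp_all add: has_real_derivative_iff_has_vector_derivative[symmetric] has_field_derivative_at_within)
  moreover have "G q - G 0 = F q - q * F' q / 2"
    unfolding G_def using assms(3,4) by (simp add: algebra_simps power2_eq_square)
  ultimately show ?thesis by simp
qed

lemma integral_energy_linear_perturbation_le:
  fixes X F F' :: "real \<Rightarrow> real"
  assumes q: "0 < q" "q \<le> 1"
    and X: "continuous_on {0..q} X" "\<And>t. t \<in> {0..q} \<Longrightarrow> 0 \<le> X t"
    and F: "\<And>t. t \<in> {0..q} \<Longrightarrow> (F has_real_derivative F' t) (at t)"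
      "\<And>t. t \<in> {0..q} \<Longrightarrow> (F' has_real_derivative X t) (at t)" "F 0 = 0" "F' 0 = 0"
    and c: "0 < c" "c \<le> A" and s: "0 < s" "s \<le> c"
  shows "integral {0..q} (\<lambda>t. X t * (A + s * (q / 2 - t)) + 1 / (A + s * (q / 2 - t)))
    \<le> integral {0..q} (\<lambda>t. X t * A + 1 / A) + s * (F q - q * F' q / 2) + s\<^sup>2 * q / (2 * c ^ 3)"
proof -
  define K where "K = s\<^sup>2 / (2 * c ^ 3)"
  define g where "g t = X t * A + 1 / A + s * ((q / 2 - t) * (X t - 1 / A\<^sup>2)) + K" for t
  have small: "\<bar>s * (q / 2 - t)\<bar> \<le> s / 2" if "t \<in> {0..q}" for t
  proof -
    have "\<bar>q / 2 - t\<bar> \<le> 1 / 2" using that q by (intro abs_leI) auto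
    then show ?thesis using s by (simp add: abs_mult mult_left_mono)
  qed
  have pos: "c / 2 \<le> A + s * (q / 2 - t)" if "t \<in> {0..q}" for t
    using small[OF that] s c by linarith
  have pointwise: "X t * (A + s * (q / 2 - t)) + 1 / (A + s * (q / 2 - t)) \<le> g t"
    if t: "t \<in> {0..q}" for t
  proof -
    define y where "y = s * (q / 2 - t)"
    have "1 / (A + y) - 1 / A \<le> - y / A\<^sup>2 + K"
      unfolding K_def y_def using c small[OF t] pos[OF t] by (intro inverse_add_le_second_order) auto
    moreover have "s * ((q / 2 - t) * (X t - 1 / A\<^sup>2)) = X t * y - y / A\<^sup>2"
      unfolding y_def using c by (simp add: field_simps)
    ultimately show ?thesis unfolding g_def y_def[symmetric] by (simp add: distrib_left)
  qed
  have "A + s * (q / 2 - t) > 0" if "t \<in> {0..q}" for t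
    using pos[OF that] c by linarith
  then have "(\<lambda>t. X t * (A + s * (q / 2 - t)) + 1 / (A + s * (q / 2 - t))) integrable_on {0..q}"
    using X(1) by (intro energy_integrable continuous_intros) auto
  moreover have "((\<lambda>_. K) has_integral K * q) {0..q}"
    using has_integral_const_real[of K 0 q] q by (simp add: mult.commute)
  then have "(g has_integral integral {0..q} (\<lambda>t. X t * A + 1 / A) + s * (F q - q * F' q / 2) + K * q) {0..q}"
    unfolding g_def using X(1) c q
    by (intro has_integral_add integrable_integral energy_integrable has_integral_mult_right
        first_variation_has_integral[OF F] continuous_intros)
      auto
  ultimately have "integral {0..q} (\<lambda>t. X t * (A + s * (q / 2 - t)) + 1 / (A + s * (q / 2 - t)))
      \<le> integral {0..q} (\<lambda>t. X t * A + 1 / A) + s * (F q - q * F' q / 2) + K * q"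
    using pointwise by (intro has_integral_le[OF integrable_integral]) auto
  then show ?thesis unfolding K_def by (simp add: field_simps)
qed

lemma integral_energy_le_of_close:
  fixes X f g :: "real \<Rightarrow> real"
  assumes "a \<le> b" and X: "continuous_on {a..b} X" "\<And>t. t \<in> {a..b} \<Longrightarrow> 0 \<le> X t"
    and fg: "continuous_on {a..b} f" "continuous_on {a..b} g" and "0 < c"
    and close: "\<And>t. t \<in> {a..b} \<Longrightarrow> c \<le> g t \<and> c / 2 \<le> f t \<and> f t \<le> g t \<and> g t - f t \<le> s / 2"
  shows "integral {a..b} (\<lambda>t. X t * f t + 1 / f t)
    \<le> integral {a..b} (\<lambda>t. X t * g t + 1 / g t) + (b - a) * (s / c\<^sup>2)"
proof -
  have pointwise: "X t * f t + 1 / f t \<le> (X t * g t + 1 / g t) + s / c\<^sup>2" if "t \<in> {a..b}" for t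
  proof -
    have "X t * f t \<le> X t * g t" using X(2) close that by (simp add: mult_left_mono)
    moreover have "1 / f t - 1 / g t \<le> s / c\<^sup>2"
      using close[OF that] \<open>0 < c\<close> by (intro inverse_diff_le) auto
    ultimately show ?thesis by simp
  qed
  have "\<And>t. t \<in> {a..b} \<Longrightarrow> 0 < f t" "\<And>t. t \<in> {a..b} \<Longrightarrow> 0 < g t"
    using close \<open>0 < c\<close> by (smt (verit, best) half_gt_zero)+
  then have "(\<lambda>t. X t * f t + 1 / f t) integrable_on {a..b}"
    "((\<lambda>t. (X t * g t + 1 / g t) + s / c\<^sup>2) has_integral
      integral {a..b} (\<lambda>t. X t * g t + 1 / g t) + (b - a) * (s / c\<^sup>2)) {a..b}"
    using \<open>a \<le> b\<close> X(1) fg has_integral_const_real[of "s / c\<^sup>2" a b]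
    by (auto intro!: has_integral_add integrable_integral energy_integrable)
  then show ?thesis using pointwise by (intro has_integral_le[OF integrable_integral]) auto
qed

lemma integral_energy_atom_shift_le:
  fixes X F F' \<phi> :: "real \<Rightarrow> real"
  assumes q: "0 < q" "q < u" "u \<le> 1"
    and X: "continuous_on {0..u} X" "\<And>t. t \<in> {0..u} \<Longrightarrow> 0 \<le> X t"
    and F: "\<And>t. t \<in> {0..q} \<Longrightarrow> (F has_real_derivative F' t) (at t)"
      "\<And>t. t \<in> {0..q} \<Longrightarrow> (F' has_real_derivative X t) (at t)" "F 0 = 0" "F' 0 = 0"
    and \<phi>: "continuous_on {0..u} \<phi>" "\<And>t. t \<in> {0..q} \<Longrightarrow> \<phi> t = \<phi> 0" "\<And>t. t \<in> {0..u} \<Longrightarrow> c \<le> \<phi> t"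
    and c: "0 < c" and s: "0 < s" "s \<le> c"
  shows "integral {0..u} (\<lambda>t. X t * (\<phi> t + s * atom_shift q u t) + 1 / (\<phi> t + s * atom_shift q u t))
    \<le> integral {0..u} (\<lambda>t. X t * \<phi> t + 1 / \<phi> t)
      + s * (F q - q * F' q / 2) + s\<^sup>2 / (2 * c ^ 3) + (u - q) * (s / c\<^sup>2)"
proof -
  define \<psi> where "\<psi> t = \<phi> t + s * atom_shift q u t" for t
  have \<psi>_ge: "c / 2 \<le> \<psi> t" if "t \<in> {0..u}" for t
    unfolding \<psi>_def using \<phi>(3)[OF that] that q s by (intro atom_shift_perturbation_ge) auto
  have cont: "continuous_on {a..b} \<phi>" "continuous_on {a..b} \<psi>" "continuous_on {a..b} X"
    if "{a..b} \<subseteq> {0..u}" for a b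
    using continuous_on_subset[OF \<phi>(1) that] continuous_on_subset[OF X(1) that] q
    unfolding \<psi>_def[abs_def] atom_shift_def by (auto intro!: continuous_intros)
  have pos: "0 < \<phi> t \<and> 0 < \<psi> t" if "t \<in> {0..u}" for t
    using \<psi>_ge[OF that] \<phi>(3)[OF that] c by linarith
  have int: "(\<lambda>t. X t * \<phi> t + 1 / \<phi> t) integrable_on {0..u}"
    "(\<lambda>t. X t * \<psi> t + 1 / \<psi> t) integrable_on {0..u}"
    using cont[of 0 u] pos by (auto intro!: energy_integrable)
  have below: "integral {0..q} (\<lambda>t. X t * \<psi> t + 1 / \<psi> t)
      \<le> integral {0..q} (\<lambda>t. X t * \<phi> t + 1 / \<phi> t) + s * (F q - q * F' q / 2) + s\<^sup>2 * q / (2 * c ^ 3)"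
  proof -
    have "X t * \<psi> t + 1 / \<psi> t = X t * (\<phi> 0 + s * (q / 2 - t)) + 1 / (\<phi> 0 + s * (q / 2 - t))"
      "X t * \<phi> t + 1 / \<phi> t = X t * \<phi> 0 + 1 / \<phi> 0" if "t \<in> {0..q}" for t
      using \<phi>(2)[OF that] atom_shift_below[of t q u] that q unfolding \<psi>_def by auto
    then have "integral {0..q} (\<lambda>t. X t * \<psi> t + 1 / \<psi> t)
        = integral {0..q} (\<lambda>t. X t * (\<phi> 0 + s * (q / 2 - t)) + 1 / (\<phi> 0 + s * (q / 2 - t)))"
      "integral {0..q} (\<lambda>t. X t * \<phi> t + 1 / \<phi> t) = integral {0..q} (\<lambda>t. X t * \<phi> 0 + 1 / \<phi> 0)"
      by (auto intro: integral_cong)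
    moreover have "c \<le> \<phi> 0" using \<phi>(3)[of 0] q by simp
    ultimately show ?thesis
      using integral_energy_linear_perturbation_le[OF q(1) _ cont(3)[of 0 q] _ F c _ s] q X(2)
      by simp
  qed
  have between: "integral {q..u} (\<lambda>t. X t * \<psi> t + 1 / \<psi> t)
      \<le> integral {q..u} (\<lambda>t. X t * \<phi> t + 1 / \<phi> t) + (u - q) * (s / c\<^sup>2)"
  proof (rule integral_energy_le_of_close)
    fix t assume t: "t \<in> {q..u}"
    have h: "- q / 2 \<le> atom_shift q u t" "atom_shift q u t \<le> 0"
      using atom_shift_between[of q t u] t q by auto
    have "s * (- q / 2) \<le> s * atom_shift q u t" using h s by (intro mult_left_mono) auto
    moreover have "s * (q / 2) \<le> s / 2" using s q by (simp add: mult_left_le)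
    moreover have "s * atom_shift q u t \<le> 0" using h s by (simp add: mult_nonneg_nonpos)
    ultimately show "c \<le> \<phi> t \<and> c / 2 \<le> \<psi> t \<and> \<psi> t \<le> \<phi> t \<and> \<phi> t - \<psi> t \<le> s / 2"
      using \<phi>(3) \<psi>_ge t q unfolding \<psi>_def by auto
  qed (use q X cont c in auto)
  have "s\<^sup>2 * q / (2 * c ^ 3) \<le> s\<^sup>2 / (2 * c ^ 3)"
    using q c by (simp add: divide_right_mono mult_left_le)
  moreover have "integral {0..u} f = integral {0..q} f + integral {q..u} f"
    if "f integrable_on {0..u}" for f :: "real \<Rightarrow> real"
    using Henstock_Kurzweil_Integration.integral_combine[of 0 q u f] that q by simp
  ultimately show ?thesis using int below between unfolding \<psi>_def[symmetric] by simp
qed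

section \<open>Superquadratic models\<close>

lemma atom_shift_parameters:
  fixes c \<delta> q a :: real
  assumes "0 < c" "\<delta> < 0" "0 < q" "q < 1" "0 < a"
  obtains u s where "q < u" "u \<le> (1 + q) / 2" "0 < s" "s \<le> c" "s * (1 + q / (2 * (u - q))) \<le> a"
    "s * \<delta> + s\<^sup>2 / (2 * c ^ 3) + (u - q) * (s / c\<^sup>2) < 0"
proof
  define \<eta> where "\<eta> = min ((1 - q) / 2) (- \<delta> * c\<^sup>2 / 4)"
  define s where "s = min c (min (a / (1 + q / (2 * \<eta>))) (- \<delta> * c ^ 3 / 2))"
  have \<eta>: "0 < \<eta>" "\<eta> \<le> (1 - q) / 2" "\<eta> \<le> - \<delta> * c\<^sup>2 / 4"
    unfolding \<eta>_def using assms by (simp add: mult_neg_pos) (rule min.cobounded1 min.cobounded2)+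
  have "0 < 1 + q / (2 * \<eta>)" using \<eta> assms by (simp add: add_pos_nonneg)
  then have s: "0 < s" "s \<le> c" "s \<le> a / (1 + q / (2 * \<eta>))" "s \<le> - \<delta> * c ^ 3 / 2"
    unfolding s_def using assms by (simp_all add: mult_neg_pos min.coboundedI1 min.coboundedI2)
  show "q < q + \<eta>" "q + \<eta> \<le> (1 + q) / 2" "0 < s" "s \<le> c" using \<eta> s by auto
  show "s * (1 + q / (2 * (q + \<eta> - q))) \<le> a"
    using s(3) \<open>0 < 1 + q / (2 * \<eta>)\<close> by (simp add: field_simps)
  have "s\<^sup>2 \<le> s * (- \<delta> * c ^ 3 / 2)"
    using s unfolding power2_eq_square by (intro mult_left_mono) auto
  then have "s\<^sup>2 / (2 * c ^ 3) \<le> s * (- \<delta> * c ^ 3 / 2) / (2 * c ^ 3)"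
    using assms by (intro divide_right_mono) auto
  also have "\<dots> = - \<delta> * s / 4" using assms by (simp add: field_simps)
  finally have "s\<^sup>2 / (2 * c ^ 3) \<le> - \<delta> * s / 4" .
  moreover have "\<eta> * (s / c\<^sup>2) \<le> (- \<delta> * c\<^sup>2 / 4) * (s / c\<^sup>2)"
    using \<eta> s assms by (intro mult_right_mono) auto
  moreover have "(- \<delta> * c\<^sup>2 / 4) * (s / c\<^sup>2) = - \<delta> * s / 4" using assms by simp
  moreover have "s * \<delta> < 0" using s assms by (simp add: mult_pos_neg)
  ultimately show "s * \<delta> + s\<^sup>2 / (2 * c ^ 3) + (q + \<eta> - q) * (s / c\<^sup>2) < 0"
    by (simp add: mult.commute)
qed

lemma P0_atom_shift_lt:
  fixes X F F' :: "real \<Rightarrow> real"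
  assumes DX: "\<And>x. x \<in> {0..1} \<Longrightarrow> deriv (deriv (xi \<beta>)) x = X x"
    and X: "continuous_on {0..1} X" "\<And>x. x \<in> {0..1} \<Longrightarrow> 0 \<le> X x"
    and F: "\<And>x. x \<in> {0..1} \<Longrightarrow> (F has_real_derivative F' x) (at x)"
      "\<And>x. x \<in> {0..1} \<Longrightarrow> (F' has_real_derivative X x) (at x)" "F 0 = 0" "F' 0 = 0"
    and \<phi>: "\<phi> \<in> classC" "P0 \<beta> \<phi> < \<infinity>"
    and q: "0 < q" "q < u" "u \<le> 1"
    and flat: "\<And>t. t \<in> {0..q} \<Longrightarrow> \<phi> t = \<phi> 0" and \<phi>_ge: "\<And>t. t \<in> {0..u} \<Longrightarrow> c \<le> \<phi> t"
    and c: "0 < c" and s: "0 < s" "s \<le> c"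
    and decrease: "s * (F q - q * F' q / 2) + s\<^sup>2 / (2 * c ^ 3) + (u - q) * (s / c\<^sup>2) < 0"
  shows "P0 \<beta> (\<lambda>t. \<phi> t + s * atom_shift q u t) < P0 \<beta> \<phi>"
proof (rule P0_lt_of_local_decrease[OF DX X _ _ _ \<open>u \<le> 1\<close> _ _ _ \<phi>(2)])
  have sub: "{0..u} \<subseteq> {0..1}" "{0..q} \<subseteq> {0..1}" using q by auto
  have "continuous_on {0..1} \<phi>" using \<phi>(1) by (simp add: classC_def)
  then show "continuous_on {0..1} \<phi>" "continuous_on {0..1} (\<lambda>t. \<phi> t + s * atom_shift q u t)"
    using q unfolding atom_shift_def by (auto intro!: continuous_intros)
  show "0 < \<phi> t" "0 < \<phi> t + s * atom_shift q u t" if "t \<in> {0..u}" for t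
    using \<phi>_ge[OF that] atom_shift_perturbation_ge[of q u t c "\<phi> t" s] that q s c by auto
  show "\<phi> t + s * atom_shift q u t = \<phi> t" if "u < t" for t
    using atom_shift_above[of u t q] that q by simp
  have "integral {0..u} (\<lambda>t. X t * (\<phi> t + s * atom_shift q u t) + 1 / (\<phi> t + s * atom_shift q u t))
      \<le> integral {0..u} (\<lambda>t. X t * \<phi> t + 1 / \<phi> t)
        + s * (F q - q * F' q / 2) + s\<^sup>2 / (2 * c ^ 3) + (u - q) * (s / c\<^sup>2)"
  proof (rule integral_energy_atom_shift_le[where X = X and F = F and F' = F' and \<phi> = \<phi>,
        OF q _ _ _ _ F(3,4) _ flat \<phi>_ge c s])
    show "continuous_on {0..u} X" "continuous_on {0..u} \<phi>"
      using X(1) \<open>continuous_on {0..1} \<phi>\<close> sub(1) by (auto intro: continuous_on_subset)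
    show "0 \<le> X t" if "t \<in> {0..u}" for t using X(2) that sub(1) by auto
    show "(F has_real_derivative F' t) (at t)" "(F' has_real_derivative X t) (at t)"
      if "t \<in> {0..q}" for t using F(1,2) that sub(2) by auto
  qed
  then show "integral {0..u} (\<lambda>t. X t * (\<phi> t + s * atom_shift q u t) + 1 / (\<phi> t + s * atom_shift q u t))
      < integral {0..u} (\<lambda>t. X t * \<phi> t + 1 / \<phi> t)"
    using decrease by linarith
qed (use q in auto)

text \<open>The hypothesis on \<open>F = \<xi>\<close> says that \<open>\<xi>(q) / q\<^sup>2\<close> is strictly increasing; it is the sign of the
  first variation of \<open>P0\<close> along \<open>atom_shift\<close>.\<close>
lemma minimizer_atom_at_0_superquadratic:
  fixes X F F' :: "real \<Rightarrow> real"
  assumes DX: "\<And>x. x \<in> {0..1} \<Longrightarrow> deriv (deriv (xi \<beta>)) x = X x"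
    and X: "continuous_on {0..1} X" "\<And>x. x \<in> {0..1} \<Longrightarrow> 0 \<le> X x"
    and F: "\<And>x. x \<in> {0..1} \<Longrightarrow> (F has_real_derivative F' x) (at x)"
      "\<And>x. x \<in> {0..1} \<Longrightarrow> (F' has_real_derivative X x) (at x)" "F 0 = 0" "F' 0 = 0"
    and superquadratic: "\<And>q. 0 < q \<Longrightarrow> q < 1 \<Longrightarrow> F q < q * F' q / 2"
    and \<phi>: "\<phi> \<in> classC" "\<forall>\<psi>\<in>classC. P0 \<beta> \<phi> \<le> P0 \<beta> \<psi>"
    and rep: "atomic_repr \<phi> Q a" "Q \<noteq> {}"
  shows "0 \<in> Q"
proof (rule ccontr)
  assume "0 \<notin> Q"
  then obtain q where q: "q \<in> Q" "0 < q" "q < 1" "0 < a q"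
    and flat: "\<And>t. t \<in> {0..q} \<Longrightarrow> \<phi> t = \<phi> 0"
    and lower: "\<And>t. t \<in> {0..(1 + q) / 2} \<Longrightarrow> a q * (1 - q) / 2 \<le> \<phi> t"
    using atomic_repr_first_atom[OF \<phi>(1) rep] by blast
  define c where "c = a q * (1 - q) / 2"
  have "0 < c" unfolding c_def using q by simp
  obtain u s where u: "q < u" "u \<le> (1 + q) / 2" and s: "0 < s" "s \<le> c"
    "s * (1 + q / (2 * (u - q))) \<le> a q"
    and decrease: "s * (F q - q * F' q / 2) + s\<^sup>2 / (2 * c ^ 3) + (u - q) * (s / c\<^sup>2) < 0"
    using atom_shift_parameters[OF \<open>0 < c\<close> _ q(2,3,4), of "F q - q * F' q / 2"]
      superquadratic[OF q(2,3)] by auto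
  have "u \<le> 1" using u q by auto
  have "(\<lambda>t. \<phi> t + s * atom_shift q u t) \<in> classC"
    using \<phi>(1) rep(1) q u \<open>u \<le> 1\<close> s by (intro classC_plus_atom_shift) auto
  moreover have "\<And>t. t \<in> {0..u} \<Longrightarrow> c \<le> \<phi> t" using lower u unfolding c_def by auto
  then have "P0 \<beta> (\<lambda>t. \<phi> t + s * atom_shift q u t) < P0 \<beta> \<phi>"
    using P0_atom_shift_lt[OF DX X F \<phi>(1) P0_finite_of_minimizer[OF DX X \<phi>(2)] q(2) u(1) \<open>u \<le> 1\<close>
        flat _ \<open>0 < c\<close> s(1,2) decrease]
    by blast
  ultimately show False using \<phi>(2) by (simp add: not_le[symmetric])
qed

section \<open>Quadratic models\<close>

lemma deviation_interval:
  assumes "\<phi> \<in> classC" and rep: "atomic_repr \<phi> Q a" and "Q \<noteq> {}" "0 \<notin> Q" and "0 < r"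
  obtains \<alpha> \<gamma> e where "0 \<le> \<alpha>" "\<alpha> < \<gamma>" "\<gamma> \<le> 1" "0 < e"
    "\<And>x. x \<in> {\<alpha>..\<gamma>} \<Longrightarrow> 0 < \<phi> x \<and> e \<le> (r * \<phi> x - 1)\<^sup>2 / \<phi> x"
proof -
  obtain q where q: "q \<in> Q" "0 < q" "q < 1" "0 < a q"
    and flat: "\<And>t. t \<in> {0..q} \<Longrightarrow> \<phi> t = \<phi> 0"
    and lower: "\<And>t. t \<in> {0..(1 + q) / 2} \<Longrightarrow> a q * (1 - q) / 2 \<le> \<phi> t"
    using atomic_repr_first_atom[OF assms(1-4)] by blast
  define A where "A = \<phi> 0"
  have "0 < a q * (1 - q) / 2" using q by simp
  then have pos: "\<And>t. t \<in> {0..(1 + q) / 2} \<Longrightarrow> 0 < \<phi> t" using lower by fastforce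
  then have "0 < A" unfolding A_def using q by simp
  show ?thesis
  proof (cases "r * A = 1")
    case False
    show ?thesis
    proof (rule that[of 0 q "(r * A - 1)\<^sup>2 / A"])
      show "0 < (r * A - 1)\<^sup>2 / A" using False \<open>0 < A\<close> by simp
      show "0 < \<phi> x \<and> (r * A - 1)\<^sup>2 / A \<le> (r * \<phi> x - 1)\<^sup>2 / \<phi> x" if "x \<in> {0..q}" for x
        using flat[OF that] \<open>0 < A\<close> unfolding A_def by simp
    qed (use q in auto)
  next
    case True
    \<comment> \<open>\<open>\<phi>\<close> equals the optimal constant \<open>1 / r\<close> before \<open>q\<close>, so it must deviate just after \<open>q\<close>.\<close>
    define d where "d = (1 - q) / 4"
    have d: "0 < d" "q + 2 * d \<le> (1 + q) / 2" "(1 + q) / 2 < 1"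
      unfolding d_def using q by (simp_all add: field_simps)
    show ?thesis
    proof (rule that[of "q + d" "q + 2 * d" "(r * a q * d)\<^sup>2 / A"])
      show "0 < (r * a q * d)\<^sup>2 / A" using \<open>0 < r\<close> q d \<open>0 < A\<close> by simp
      show "0 \<le> q + d" "q + d < q + 2 * d" "q + 2 * d \<le> 1" using q(2) d by auto
    next
      fix x assume x: "x \<in> {q + d..q + 2 * d}"
      then have x_le: "x \<le> (1 + q) / 2" and x01: "x \<in> {0..1}" and "max x q = x"
        using q(2) d by auto
      then have "\<phi> x \<le> A - a q * d"
        using atomic_repr_le_drop[OF rep q(1) x01] x q(4) unfolding A_def
        by (smt (verit, best) atLeastAtMost_iff mult_left_mono)
      moreover have "0 < a q * d" using q d by simp
      ultimately have "\<phi> x \<le> A" "r * \<phi> x \<le> r * (A - a q * d)"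
        using \<open>0 < r\<close> by (auto intro: mult_left_mono)
      then have "r * a q * d \<le> 1 - r * \<phi> x" and "\<phi> x \<le> A"
        using True by (auto simp: algebra_simps)
      moreover have "0 \<le> r * a q * d" using \<open>0 < r\<close> q d by simp
      ultimately have "(r * a q * d)\<^sup>2 \<le> (r * \<phi> x - 1)\<^sup>2"
        using power_mono[of "r * a q * d" "1 - r * \<phi> x" 2] by (simp add: power2_commute)
      moreover have "0 < \<phi> x" using pos x_le x01 by simp
      ultimately show "0 < \<phi> x \<and> (r * a q * d)\<^sup>2 / A \<le> (r * \<phi> x - 1)\<^sup>2 / \<phi> x"
        using \<open>\<phi> x \<le> A\<close> by (simp add: frac_le)
    qed
  qed
qed

lemma P0_ge_quadratic:
  assumes "0 < b" and DX: "\<And>x. x \<in> {0..1} \<Longrightarrow> deriv (deriv (xi \<beta>)) x = 2 * b"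
    and J: "0 \<le> \<alpha>" "\<alpha> < \<gamma>" "\<gamma> \<le> 1" "0 < e"
    and dev: "\<And>x. x \<in> {\<alpha>..\<gamma>} \<Longrightarrow> 0 < \<phi> x \<and> e \<le> (sqrt (2 * b) * \<phi> x - 1)\<^sup>2 / \<phi> x"
  shows "ennreal (2 * sqrt (2 * b) + e * (\<gamma> - \<alpha>)) \<le> P0 \<beta> \<phi>"
proof -
  define r where "r = sqrt (2 * b)"
  have "0 < r" unfolding r_def using \<open>0 < b\<close> by simp
  have square: "2 * b * y + 1 / y = 2 * r + (r * y - 1)\<^sup>2 / y" if "0 < y" for y
    using that \<open>0 < b\<close> unfolding r_def by (simp add: field_simps power2_eq_square)
  have density: "ennreal (2 * r + (if x \<in> {\<alpha>..\<gamma>} then e else 0))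
      \<le> energy_density (deriv (deriv (xi \<beta>))) \<phi> x" if "x \<in> {0..1}" for x
  proof (cases "\<phi> x > 0")
    case True
    have "0 \<le> (r * \<phi> x - 1)\<^sup>2 / \<phi> x" using True by simp
    then have "2 * r + (if x \<in> {\<alpha>..\<gamma>} then e else 0) \<le> 2 * b * \<phi> x + 1 / \<phi> x"
      unfolding square[OF True] using dev[folded r_def] by auto
    then have "ennreal (2 * r + (if x \<in> {\<alpha>..\<gamma>} then e else 0)) \<le> ennreal (2 * b * \<phi> x + 1 / \<phi> x)"
      by (rule ennreal_leI)
    also have "\<dots> = ennreal (2 * b * \<phi> x) + ennreal (1 / \<phi> x)"
      using True \<open>0 < b\<close> by (intro ennreal_plus) auto
    also have "\<dots> = energy_density (deriv (deriv (xi \<beta>))) \<phi> x"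
      using True DX[OF that] by (simp add: energy_density_def)
    finally show ?thesis .
  qed (simp add: energy_density_def)
  have "(\<lambda>x. ennreal (2 * r + (if x \<in> {\<alpha>..\<gamma>} then e else 0)) * indicator {0..1} x)
      = (\<lambda>x. ennreal (2 * r) * indicator {0..1} x + ennreal e * indicator {\<alpha>..\<gamma>} x)"
    using J \<open>0 < r\<close> by (auto simp: indicator_def ennreal_plus fun_eq_iff)
  then have "(\<integral>\<^sup>+x. ennreal (2 * r + (if x \<in> {\<alpha>..\<gamma>} then e else 0)) * indicator {0..1} x \<partial>lborel)
      = ennreal (2 * r) + ennreal (e * (\<gamma> - \<alpha>))"
    using J by (simp add: nn_integral_add nn_integral_cmult_indicator ennreal_mult)
  also have "\<dots> = ennreal (2 * r + e * (\<gamma> - \<alpha>))"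
    using J \<open>0 < r\<close> by (simp add: ennreal_plus)
  finally have "ennreal (2 * r + e * (\<gamma> - \<alpha>))
      = (\<integral>\<^sup>+x. ennreal (2 * r + (if x \<in> {\<alpha>..\<gamma>} then e else 0)) * indicator {0..1} x \<partial>lborel)" ..
  also have "\<dots> \<le> (\<integral>\<^sup>+x. energy_density (deriv (deriv (xi \<beta>))) \<phi> x * indicator {0..1} x \<partial>lborel)"
  proof (rule nn_integral_mono)
    fix x :: real
    show "ennreal (2 * r + (if x \<in> {\<alpha>..\<gamma>} then e else 0)) * indicator {0..1} x
        \<le> energy_density (deriv (deriv (xi \<beta>))) \<phi> x * indicator {0..1} x"
      using density[of x] by (cases "x \<in> {0..1}") simp_all
  qed
  finally show ?thesis unfolding P0_eq_nn_integral_energy_density r_def .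
qed

lemma minimizer_atom_at_0_quadratic:
  assumes "0 < b" and DX: "\<And>x. x \<in> {0..1} \<Longrightarrow> deriv (deriv (xi \<beta>)) x = 2 * b"
    and \<phi>: "\<phi> \<in> classC" "\<forall>\<psi>\<in>classC. P0 \<beta> \<phi> \<le> P0 \<beta> \<psi>"
    and rep: "atomic_repr \<phi> Q a" "Q \<noteq> {}"
  shows "0 \<in> Q"
proof (rule ccontr)
  assume "0 \<notin> Q"
  define r where "r = sqrt (2 * b)"
  have "0 < r" unfolding r_def using \<open>0 < b\<close> by simp
  obtain \<alpha> \<gamma> e where J: "0 \<le> \<alpha>" "\<alpha> < \<gamma>" "\<gamma> \<le> 1" "0 < e"
    and dev: "\<And>x. x \<in> {\<alpha>..\<gamma>} \<Longrightarrow> 0 < \<phi> x \<and> e \<le> (r * \<phi> x - 1)\<^sup>2 / \<phi> x"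
    using deviation_interval[OF \<phi>(1) rep \<open>0 \<notin> Q\<close> \<open>0 < r\<close>] by blast
  have "2 * b / r = r" using \<open>0 < b\<close> unfolding r_def by (simp add: real_div_sqrt)
  then have "P0 \<beta> (\<lambda>_. 1 / r) = ennreal (2 * r)"
    using P0_const[of \<beta> "\<lambda>_. 2 * b" "1 / r"] DX \<open>0 < r\<close> \<open>0 < b\<close>
    by (simp add: ennreal_plus[symmetric])
  also have "\<dots> < ennreal (2 * r + e * (\<gamma> - \<alpha>))"
    using J \<open>0 < r\<close> by (simp add: ennreal_less_iff)
  also have "\<dots> \<le> P0 \<beta> \<phi>"
    unfolding r_def by (rule P0_ge_quadratic[OF \<open>0 < b\<close> DX J dev[unfolded r_def]])
  finally have "P0 \<beta> (\<lambda>_. 1 / r) < P0 \<beta> \<phi>" .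
  moreover have "P0 \<beta> \<phi> \<le> P0 \<beta> (\<lambda>_. 1 / r)" using \<phi>(2) classC_const[of "1 / r"] \<open>0 < r\<close> by simp
  ultimately show False by simp
qed

section \<open>Models as power series\<close>

lemma deriv_deriv_powser:
  fixes c :: "nat \<Rightarrow> real"
  assumes conv: "\<And>z. \<bar>z\<bar> < K \<Longrightarrow> summable (\<lambda>n. c n * z ^ n)" and x: "\<bar>x\<bar> < K"
  shows "deriv (deriv (\<lambda>x. \<Sum>n. c n * x ^ n)) x = (\<Sum>n. diffs (diffs c) n * x ^ n)"
proof (rule DERIV_imp_deriv)
  have conv': "\<And>z. \<bar>z\<bar> < K \<Longrightarrow> summable (\<lambda>n. diffs c n * z ^ n)"
    using conv by (auto intro: termdiff_converges)
  show "(deriv (\<lambda>x. \<Sum>n. c n * x ^ n) has_real_derivative (\<Sum>n. diffs (diffs c) n * x ^ n)) (at x)"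
  proof (rule has_field_derivative_transform_within_open)
    show "((\<lambda>x. \<Sum>n. diffs c n * x ^ n) has_real_derivative (\<Sum>n. diffs (diffs c) n * x ^ n)) (at x)"
      using termdiffs_strong'[of K "diffs c" x] conv' x by simp
    show "(\<Sum>n. diffs c n * y ^ n) = deriv (\<lambda>x. \<Sum>n. c n * x ^ n) y" if "y \<in> ball 0 K" for y
      using termdiffs_strong'[of K c y] conv that by (auto intro!: DERIV_imp_deriv[symmetric])
  qed (use x in auto)
qed

lemma powser_lt_half_deriv:
  fixes c :: "nat \<Rightarrow> real"
  assumes conv: "\<And>z. \<bar>z\<bar> < K \<Longrightarrow> summable (\<lambda>n. c n * z ^ n)"
    and c: "\<And>n. 0 \<le> c n" "c 0 = 0" "c 1 = 0" and p: "3 \<le> p" "0 < c p" and q: "0 < q" "q < K"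
  shows "(\<Sum>n. c n * q ^ n) < q * (\<Sum>n. diffs c n * q ^ n) / 2"
proof -
  \<comment> \<open>Termwise, \<open>q \<xi>'(q) / 2 - \<xi>(q) = \<Sum> (n / 2 - 1) c\<^sub>n q\<^sup>n\<close>, and \<open>n / 2 - 1 > 0\<close> for \<open>n \<ge> 3\<close>.\<close>
  define t where "t n = (real n / 2 - 1) * (c n * q ^ n)" for n
  have "(\<lambda>n. real n * c n * q ^ (n - 1)) sums (\<Sum>n. diffs c n * q ^ n)"
    using diffs_equiv[OF termdiff_converges[of q K c]] conv q by simp
  then have "(\<lambda>n. q * (real n * c n * q ^ (n - 1)) / 2) sums (q * (\<Sum>n. diffs c n * q ^ n) / 2)"
    by (intro sums_divide sums_mult)
  moreover have "(\<lambda>n. q * (real n * c n * q ^ (n - 1)) / 2) = (\<lambda>n. real n / 2 * (c n * q ^ n))"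
  proof
    show "q * (real n * c n * q ^ (n - 1)) / 2 = real n / 2 * (c n * q ^ n)" for n
      by (cases n) (simp_all add: algebra_simps)
  qed
  moreover have "(\<lambda>n. c n * q ^ n) sums (\<Sum>n. c n * q ^ n)"
    using conv q by (simp add: summable_sums)
  ultimately have "t sums (q * (\<Sum>n. diffs c n * q ^ n) / 2 - (\<Sum>n. c n * q ^ n))"
    unfolding t_def left_diff_distrib by (intro sums_diff) simp_all
  moreover have "0 \<le> t n" for n
  proof (cases "n \<le> 1")
    case True
    then have "n = 0 \<or> n = 1" by auto
    then show ?thesis using c by (auto simp: t_def)
  next
    case False
    then show ?thesis using c q by (simp add: t_def)
  qed
  moreover have "0 < t p" using p q by (simp add: t_def)
  ultimately show ?thesis using suminf_pos2[of t p] by (simp add: sums_iff)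
qed

lemma model_summable:
  assumes "is_model \<beta>"
  obtains K where "1 < K" "\<And>z. \<bar>z\<bar> < K \<Longrightarrow> summable (\<lambda>p. (\<beta> p)\<^sup>2 * z ^ p)"
proof -
  obtain \<epsilon> where "0 < \<epsilon>" and sm: "summable (\<lambda>p. (\<beta> p)\<^sup>2 * (1 + \<epsilon>) ^ p)"
    using assms unfolding is_model_def by blast
  show ?thesis
  proof
    show "1 < 1 + \<epsilon>" using \<open>0 < \<epsilon>\<close> by simp
    show "summable (\<lambda>p. (\<beta> p)\<^sup>2 * z ^ p)" if "\<bar>z\<bar> < 1 + \<epsilon>" for z
      using powser_inside[OF sm, of z] that \<open>0 < \<epsilon>\<close> by simp
  qed
qed

lemma deriv_deriv_xi_quadratic:
  assumes "\<And>p. p \<noteq> 2 \<Longrightarrow> \<beta> p = 0"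
  shows "deriv (deriv (xi \<beta>)) x = 2 * (\<beta> 2)\<^sup>2"
proof -
  have "xi \<beta> = (\<lambda>t. (\<beta> 2)\<^sup>2 * t\<^sup>2)"
    unfolding xi_def by (intro ext, subst suminf_finite[of "{2}"]) (use assms in auto)
  moreover have "deriv (\<lambda>t. (\<beta> 2)\<^sup>2 * t\<^sup>2) = (\<lambda>t. 2 * (\<beta> 2)\<^sup>2 * t)"
    by (intro ext DERIV_imp_deriv) (auto intro!: derivative_eq_intros)
  ultimately show ?thesis
    by (auto intro!: DERIV_imp_deriv derivative_eq_intros)
qed

lemma minimizer_atom_at_0_higher_order:
  assumes model: "is_model \<beta>" and p: "3 \<le> p" "\<beta> p \<noteq> 0"
    and \<phi>: "\<phi> \<in> classC" "\<forall>\<psi>\<in>classC. P0 \<beta> \<phi> \<le> P0 \<beta> \<psi>"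
    and rep: "atomic_repr \<phi> Q a" "Q \<noteq> {}"
  shows "0 \<in> Q"
proof -
  obtain K where "1 < K" and conv: "\<And>z. \<bar>z\<bar> < K \<Longrightarrow> summable (\<lambda>p. (\<beta> p)\<^sup>2 * z ^ p)"
    using model_summable[OF model] by blast
  define c where "c p = (\<beta> p)\<^sup>2" for p
  have c: "\<And>n. 0 \<le> c n" "c 0 = 0" "c 1 = 0" "0 < c p"
    using model p unfolding c_def is_model_def by auto
  have conv0: "\<And>z. \<bar>z\<bar> < K \<Longrightarrow> summable (\<lambda>n. c n * z ^ n)"
    using conv unfolding c_def by simp
  then have conv1: "\<And>z. \<bar>z\<bar> < K \<Longrightarrow> summable (\<lambda>n. diffs c n * z ^ n)"
    by (intro termdiff_converges) auto
  have conv2: "\<And>z. \<bar>z\<bar> < K \<Longrightarrow> summable (\<lambda>n. diffs (diffs c) n * z ^ n)"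
    by (rule termdiff_converges) (auto intro: conv1)
  let ?S = "\<lambda>f x. \<Sum>n. f n * x ^ n"
  have in_K: "\<bar>x\<bar> < K" if "x \<in> {0..1}" for x using that \<open>1 < K\<close> by auto
  have X_deriv: "(?S (diffs c) has_real_derivative ?S (diffs (diffs c)) x) (at x)" if "x \<in> {0..1}" for x
    using termdiffs_strong'[of K "diffs c" x] conv1 in_K[OF that] by simp
  show ?thesis
  proof (rule minimizer_atom_at_0_superquadratic[OF _ _ _ _ X_deriv _ _ _ \<phi> rep])
    show "deriv (deriv (xi \<beta>)) x = ?S (diffs (diffs c)) x" if "x \<in> {0..1}" for x
      using deriv_deriv_powser[of K c x] conv0 in_K[OF that] unfolding xi_def[abs_def] c_def[abs_def] by simp
    have "isCont (?S (diffs (diffs c))) x" if "x \<in> {0..1}" for x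
      using termdiffs_strong'[of K "diffs (diffs c)" x] conv2 in_K[OF that] by (simp add: DERIV_isCont)
    then show "continuous_on {0..1} (?S (diffs (diffs c)))"
      by (intro continuous_at_imp_continuous_on) auto
    show "0 \<le> ?S (diffs (diffs c)) x" if "x \<in> {0..1}" for x
      using conv2 in_K[OF that] that c(1) by (intro suminf_nonneg) (auto simp: diffs_def)
    show "(?S c has_real_derivative ?S (diffs c) x) (at x)" if "x \<in> {0..1}" for x
      using termdiffs_strong'[of K c x] conv0 in_K[OF that] by simp
    show "?S c 0 = 0" "?S (diffs c) 0 = 0" using c by (simp_all add: diffs_def)
    show "?S c q < q * ?S (diffs c) q / 2" if "0 < q" "q < 1" for q
      using that \<open>1 < K\<close> c conv0 p(1) by (intro powser_lt_half_deriv[of K c]) auto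
  qed
qed

lemma minimizer_atom_at_0:
  assumes model: "is_model \<beta>" and \<phi>: "\<phi> \<in> classC" "\<forall>\<psi>\<in>classC. P0 \<beta> \<phi> \<le> P0 \<beta> \<psi>"
    and rep: "atomic_repr \<phi> Q a" "Q \<noteq> {}"
  shows "0 \<in> Q"
proof (cases "\<exists>p\<ge>3. \<beta> p \<noteq> 0")
  case True
  then show ?thesis using minimizer_atom_at_0_higher_order[OF model _ _ \<phi> rep] by blast
next
  case False
  have quadratic: "\<beta> p = 0" if "p \<noteq> 2" for p
  proof (cases "3 \<le> p")
    case True
    then show ?thesis using \<open>\<not> (\<exists>p\<ge>3. \<beta> p \<noteq> 0)\<close> by auto
  next
    case False
    then have "p = 0 \<or> p = 1" using that by auto
    then show ?thesis using model unfolding is_model_def by auto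
  qed
  then have "\<beta> 2 \<noteq> 0" using model unfolding is_model_def by metis
  then show ?thesis
    using deriv_deriv_xi_quadratic[OF quadratic]
    by (intro minimizer_atom_at_0_quadratic[OF _ _ \<phi> rep]) auto
qed

theorem lemma1p20:
  fixes \<beta> :: "nat \<Rightarrow> real" and \<phi> :: "real \<Rightarrow> real" and k :: nat
  assumes "is_model \<beta>" and "k \<ge> 1"
    and "\<phi> \<in> classC" and "\<forall>\<psi>\<in>classC. P0 \<beta> \<phi> \<le> P0 \<beta> \<psi>"
    and "\<phi> \<in> RSB k"
  shows "(\<exists>L. ((\<lambda>t. (\<phi> t - \<phi> 0) / t) \<longlongrightarrow> L) (at_right 0) \<and> L < 0)
    \<and> (\<forall>Q a. atomic_repr \<phi> Q a \<longrightarrow> 0 \<in> Q)"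
proof -
  obtain Q a where rep: "atomic_repr \<phi> Q a" and "card Q = k"
    using assms(5) unfolding RSB_def by blast
  then have "Q \<noteq> {}" using \<open>k \<ge> 1\<close> by auto
  have atom_at_0: "0 \<in> Q'" if "atomic_repr \<phi> Q' a'" for Q' a'
    using minimizer_atom_at_0[OF assms(1,3,4) that atomic_repr_nonempty[OF rep that \<open>Q \<noteq> {}\<close>]] .
  have "0 < a 0" using rep atom_at_0[OF rep] unfolding atomic_repr_def by blast
  moreover have "((\<lambda>t. (\<phi> t - \<phi> 0) / t) \<longlongrightarrow> - a 0) (at_right 0)"
    by (rule atomic_repr_slope_at_0[OF rep atom_at_0[OF rep]])
  ultimately show ?thesis using atom_at_0 by (intro conjI exI[of _ "- a 0"] allI impI) auto
qed

end
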